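(* Let $A>0$ and let $c:[0,1]\times S^1\to\mathbb R^2$ be a smooth path in $\mathrm{Imm}(S^1,\mathbb R^2)$ and $L>0$ such that for all $t,\theta$: $|c_\theta(t,\theta)|=\ell(t)/2\pi$ where $\ell(t)=\ell(c(t,\cdot))$; $\langle c_t,c_\theta\rangle(t,0)=0$; and $\int_{S^1}(1+A\kappa_{c(t)}^2)\langle c_t,ic_\theta\rangle^2\,d\theta/|c_\theta|=L^2$. Let $\ell_{\max}=\max_t\ell(t)$, $\ell_{\min}=\min_t\ell(t)$. Then $$|c(t_1,\theta_1)-c(t_2,\theta_2)|\le\frac{\ell_{\max}}{2\pi}|\theta_1-\theta_2|+7\big(\ell_{\max}^{3/4}A^{-1/4}+\ell_{\max}^{1/4}\big)\sqrt{L|t_1-t_2|}$$ whenever $|t_1-t_2|\le\min(2\sqrt{A\ell_{\min}},\ell_{\min}^{3/2})/(8L)$.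
   Context: $S^1=\mathbb R/2\pi\mathbb Z$ (with $|\theta_1-\theta_2|$ the distance of representatives in $[0,2\pi]$), $\mathbb R^2\cong\mathbb C$. $\mathrm{Imm}(S^1,\mathbb R^2)$ is the space of smooth immersions; a smooth path is a jointly smooth map $c(t,\theta)$ with each $c(t,\cdot)$ an immersion. $\ell(c)=\int_{S^1}|c_\theta|d\theta$, $\kappa_c=\det(c_\theta,c_{\theta\theta})/|c_\theta|^3$. *)

theory Defs
  imports "HOL-Analysis.Analysis"
begin

fun Ck_on :: "nat \<Rightarrow> (real \<times> real) set \<Rightarrow> (real \<times> real \<Rightarrow> 'a::real_normed_vector) \<Rightarrow> bool" where
  "Ck_on 0 S f = continuous_on S f"
| "Ck_on (Suc k) S f =
     (\<exists>D. (\<forall>x\<in>S. (f has_derivative D x) (at x within S))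
          \<and> Ck_on k S (\<lambda>x. D x (1, 0)) \<and> Ck_on k S (\<lambda>x. D x (0, 1)))"

definition smooth2_on :: "(real \<times> real) set \<Rightarrow> (real \<times> real \<Rightarrow> 'a::real_normed_vector) \<Rightarrow> bool" where
  "smooth2_on S f \<longleftrightarrow> (\<forall>k. Ck_on k S f)"

text \<open>A path c(t,theta), t in [0,1], theta in R with 2pi-periodicity (i.e. theta in S^1).\<close>
definition d_theta :: "(real \<Rightarrow> real \<Rightarrow> complex) \<Rightarrow> real \<Rightarrow> real \<Rightarrow> complex" where
  "d_theta c t \<theta> = vector_derivative (\<lambda>s. c t s) (at \<theta>)"

definition d_t :: "(real \<Rightarrow> real \<Rightarrow> complex) \<Rightarrow> real \<Rightarrow> real \<Rightarrow> complex" where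
  "d_t c t \<theta> = vector_derivative (\<lambda>s. c s \<theta>) (at t within {0..1})"

definition smooth_imm_path :: "(real \<Rightarrow> real \<Rightarrow> complex) \<Rightarrow> bool" where
  "smooth_imm_path c \<longleftrightarrow>
     smooth2_on ({0..1} \<times> UNIV) (\<lambda>(t, \<theta>). c t \<theta>)
     \<and> (\<forall>t\<in>{0..1}. \<forall>\<theta>. c t (\<theta> + 2 * pi) = c t \<theta>)
     \<and> (\<forall>t\<in>{0..1}. \<forall>\<theta>. d_theta c t \<theta> \<noteq> 0)"

definition curve_length :: "(real \<Rightarrow> real \<Rightarrow> complex) \<Rightarrow> real \<Rightarrow> real" where
  "curve_length c t = integral {0..2 * pi} (\<lambda>\<theta>. norm (d_theta c t \<theta>))"

text \<open>curvature det(c_theta, c_theta theta)/|c_theta|^3; det(a,b) = Im(cnj a * b)\<close>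
definition curvature :: "(real \<Rightarrow> real \<Rightarrow> complex) \<Rightarrow> real \<Rightarrow> real \<Rightarrow> real" where
  "curvature c t \<theta> =
     Im (cnj (d_theta c t \<theta>) * vector_derivative (\<lambda>s. d_theta c t s) (at \<theta>))
     / norm (d_theta c t \<theta>) ^ 3"

end

(*
  Write v = l / (2 pi) = |c_theta| for the speed and w = <c_t, i c_theta> for the normal part
  of c_t.  The energy identity gives int w^2 <= v L^2 and int (kappa w)^2 <= v L^2 / A, hence
  K = int |kappa w| <= L sqrt (2 pi v / A).  Because |c_theta| does not depend on theta,
  d/dtheta <c_t, c_theta> = v kappa w + <d_t c_theta, c_theta>, and the last term depends on t
  only.  Since <c_t, c_theta> vanishes at theta = 0 and is periodic, this term is at most
  v K / (2 pi), so |<c_t, c_theta>| <= 2 v K and |c_t| <= 2 K + |w| / v.  The same term is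
  (v^2)' / 2, which makes sqrt v Lipschitz in t, so the speed changes at most by a factor 2
  for admissible |t1 - t2|.  Finally |c(t1, theta) - c(t2, theta)| is bounded through c(t1, x)
  and c(t2, x), averaged over angles x in a window of width delta around theta: the
  theta-Lipschitz bound costs 3 v delta, and the time integral of |c_t| over the window costs
  |t1 - t2| (2 K + L sqrt (2 / (v delta))).  The width delta = pi sqrt (L |t1 - t2|) / l^(3/4)
  balances the two.
*)

theory Submission
  imports Defs
begin

lemma Ck_on_imp_continuous_on: "Ck_on k S f \<Longrightarrow> continuous_on S f"
  by (cases k) (auto simp: continuous_on_eq_continuous_within intro: has_derivative_continuous)

lemma has_derivative_imp_partial_derivatives:
  fixes G :: "real \<times> real \<Rightarrow> 'a::real_normed_vector"
  assumes G: "(G has_derivative G') (at (t, \<theta>) within T \<times> UNIV)" and t: "t \<in> T"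
  shows "((\<lambda>s. G (t, s)) has_vector_derivative G' (0, 1)) (at \<theta>)"
    and "((\<lambda>s. G (s, \<theta>)) has_vector_derivative G' (1, 0)) (at t within T)"
proof -
  have lin: "linear G'" using G by (rule has_derivative_linear)
  have "(G has_derivative G') (at (t, \<theta>) within range (Pair t))"
    by (rule has_derivative_subset[OF G]) (use t in auto)
  from diff_chain_within[OF has_derivative_Pair[OF has_derivative_const has_derivative_ident] this]
  have "((\<lambda>s. G (t, s)) has_derivative (\<lambda>h. G' (0, h))) (at \<theta>)"
    by (simp add: o_def)
  moreover have "(\<lambda>h. G' (0, h)) = (\<lambda>h. h *\<^sub>R G' (0, 1))"
    by (simp flip: linear_scale[OF lin])
  ultimately show "((\<lambda>s. G (t, s)) has_vector_derivative G' (0, 1)) (at \<theta>)"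
    by (simp add: has_vector_derivative_def)
  have "(G has_derivative G') (at (t, \<theta>) within (\<lambda>s. (s, \<theta>)) ` T)"
    by (rule has_derivative_subset[OF G]) auto
  from diff_chain_within[OF has_derivative_Pair[OF has_derivative_ident has_derivative_const] this]
  have "((\<lambda>s. G (s, \<theta>)) has_derivative (\<lambda>h. G' (h, 0))) (at t within T)"
    by (simp add: o_def)
  moreover have "(\<lambda>h. G' (h, 0)) = (\<lambda>h. h *\<^sub>R G' (1, 0))"
    by (simp flip: linear_scale[OF lin])
  ultimately show "((\<lambda>s. G (s, \<theta>)) has_vector_derivative G' (1, 0)) (at t within T)"
    by (simp add: has_vector_derivative_def)
qed

lemma continuous_on_section_snd:
  assumes "continuous_on (T \<times> UNIV) (\<lambda>(t, \<theta>). g t \<theta>)" and "t \<in> T"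
  shows "continuous_on S (g t)"
proof -
  have "continuous_on S ((\<lambda>(t, \<theta>). g t \<theta>) \<circ> Pair t)"
    using assms
    by (intro continuous_on_compose continuous_intros continuous_on_subset[OF assms(1)]) auto
  then show ?thesis by (simp add: o_def)
qed

lemma continuous_on_section_fst:
  assumes "continuous_on (T \<times> UNIV) (\<lambda>(t, \<theta>). g t \<theta>)" and "S \<subseteq> T"
  shows "continuous_on S (\<lambda>t. g t \<theta>)"
proof -
  have "continuous_on S ((\<lambda>(t, \<theta>). g t \<theta>) \<circ> (\<lambda>t. (t, \<theta>)))"
    using assms
    by (intro continuous_on_compose continuous_intros continuous_on_subset[OF assms(1)]) auto
  then show ?thesis by (simp add: o_def)
qed

text \<open>Expand \<open>\<integral>(\<bar>f\<bar> - m)\<^sup>2 \<ge> 0\<close> for the mean \<open>m\<close> of \<open>\<bar>f\<bar>\<close>.\<close>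

lemma integral_abs_squared_le:
  fixes f :: "real \<Rightarrow> real"
  assumes f: "continuous_on {a..b} f"
  shows "(integral {a..b} (\<lambda>x. \<bar>f x\<bar>))\<^sup>2 \<le> (b - a) * integral {a..b} (\<lambda>x. (f x)\<^sup>2)"
proof (cases "a < b")
  case True
  define I where "I = integral {a..b} (\<lambda>x. \<bar>f x\<bar>)"
  define m where "m = I / (b - a)"
  have sq: "((\<lambda>x. (f x)\<^sup>2) has_integral integral {a..b} (\<lambda>x. (f x)\<^sup>2)) {a..b}"
    and ab: "((\<lambda>x. \<bar>f x\<bar>) has_integral I) {a..b}"
    unfolding I_def
    by (intro integrable_integral integrable_continuous_interval continuous_intros f)+
  have "((\<lambda>x. (\<bar>f x\<bar> - m)\<^sup>2) has_integral
      integral {a..b} (\<lambda>x. (f x)\<^sup>2) - 2 * m * I + m\<^sup>2 * (b - a)) {a..b}"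
  proof -
    have "((\<lambda>x. (f x)\<^sup>2 - 2 * m * \<bar>f x\<bar> + m\<^sup>2) has_integral
        integral {a..b} (\<lambda>x. (f x)\<^sup>2) - 2 * m * I + m\<^sup>2 * (b - a)) {a..b}"
      using has_integral_add[OF has_integral_diff[OF sq
          has_integral_mult_right[where c = "2 * m", OF ab]] has_integral_const_real[of "m\<^sup>2" a b]]
        True
      by (simp add: mult.commute)
    then show ?thesis by (simp add: power2_diff algebra_simps)
  qed
  then have "0 \<le> integral {a..b} (\<lambda>x. (f x)\<^sup>2) - 2 * m * I + m\<^sup>2 * (b - a)"
    by (rule has_integral_nonneg) simp
  moreover have mI: "m * (b - a) = I"
    using True by (simp add: m_def)
  moreover have "m\<^sup>2 * (b - a) = m * I"
    by (simp add: power2_eq_square mI[symmetric])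
  ultimately have "m * I \<le> integral {a..b} (\<lambda>x. (f x)\<^sup>2)"
    by linarith
  then have "(b - a) * (m * I) \<le> (b - a) * integral {a..b} (\<lambda>x. (f x)\<^sup>2)"
    using True by (intro mult_left_mono) auto
  moreover have "I\<^sup>2 = (b - a) * (m * I)"
    by (simp add: mI[symmetric] power2_eq_square ac_simps)
  ultimately show ?thesis
    by (simp add: I_def)
next
  case False
  then have "integral {a..b} g = 0" for g :: "real \<Rightarrow> real"
    using integral_null[of a b g] by simp
  then show ?thesis by simp
qed

lemma norm_mult_le_abs_inner_add_abs_inner:
  "norm (z::complex) * norm u \<le> \<bar>inner z u\<bar> + \<bar>inner z (\<i> * u)\<bar>"
proof -
  have "norm (z * cnj u) \<le> \<bar>Re (z * cnj u)\<bar> + \<bar>Im (z * cnj u)\<bar>" by (rule cmod_le)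
  then show ?thesis by (simp add: inner_complex_def norm_mult algebra_simps)
qed

lemma inner_of_orthogonal_complex:
  fixes y z u :: complex
  assumes "inner y u = 0"
  shows "inner z y * (norm u)\<^sup>2 = Im (cnj u * y) * inner z (\<i> * u)"
proof -
  have "inner z y * (norm u)\<^sup>2 = Im (cnj u * y) * inner z (\<i> * u) + inner y u * inner z u"
    unfolding cmod_power2 by (simp add: inner_complex_def algebra_simps power2_eq_square)
  with assms show ?thesis by simp
qed

lemma vector_derivative_unique_unit_interval:
  assumes "t \<in> {0..1}"
    and "(f has_vector_derivative f') (at t within {0..1})"
    and "(f has_vector_derivative f'') (at t within {0..1})"
  shows "f' = f''"
  using vector_derivative_unique_within_closed_interval[of 0 1 t f f' f''] assms by simp

lemma powr_quarter_power:
  fixes x :: real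
  assumes "0 < x"
  shows "(x powr (1 / 4)) ^ n = x powr (real n / 4)"
proof -
  have "(x powr (1 / 4)) ^ n = (x powr (1 / 4)) powr real n"
    using assms by (simp add: powr_realpow)
  also have "\<dots> = x powr (real n / 4)"
    by (simp add: powr_powr)
  finally show ?thesis .
qed

text \<open>The final estimate in the variables \<open>q = l powr (1/4)\<close>, \<open>a = A powr (1/4)\<close> and
  \<open>P = sqrt (L * \<tau>)\<close> (curve length \<open>l\<close>, time difference \<open>\<tau>\<close>): with the window width
  \<open>\<delta> = pi * P / q ^ 3\<close> every term is of order \<open>q * P\<close> or \<open>q ^ 3 * P / a\<close>.\<close>

lemma window_bound_le:
  fixes q a P \<tau> L v \<delta> :: real
  assumes q: "0 < q" and a: "0 < a" and P: "0 < P" and L: "0 < L"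
    and PP: "\<tau> * L = P\<^sup>2" and Pa: "P \<le> a * q / 2" and Pq: "P \<le> q ^ 3 / 2"
    and v: "v = q ^ 4 / (2 * pi)" and \<delta>: "\<delta> = pi * P / q ^ 3"
  shows "3 * v * \<delta> + \<tau> * (2 * L * sqrt (4 * pi * v / a ^ 4)) + \<tau> * (L * sqrt (2 / v)) / sqrt \<delta>
    \<le> 7 * (q ^ 3 / a + q) * P"
proof -
  have \<tau>: "\<tau> = P\<^sup>2 / L"
    using PP L by (simp add: field_simps)
  have sqrt2: "sqrt 2 \<le> 3 / 2"
    by (rule real_le_lsqrt) (simp_all add: power2_eq_square)
  have "3 * v * \<delta> = 3 / 2 * q * P"
    using q by (simp add: v \<delta> field_simps power_eq_if)
  moreover have "\<tau> * (2 * L * sqrt (4 * pi * v / a ^ 4)) \<le> 3 / 2 * (q ^ 3 / a) * P"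
  proof -
    have "4 * pi * v / a ^ 4 = 2 * (q\<^sup>2 / a\<^sup>2)\<^sup>2"
      by (simp add: v power_divide flip: power_mult)
    then have "sqrt (4 * pi * v / a ^ 4) = sqrt 2 * (q\<^sup>2 / a\<^sup>2)"
      by (simp add: real_sqrt_mult)
    then have "\<tau> * (2 * L * sqrt (4 * pi * v / a ^ 4)) = 2 * sqrt 2 * P * (P * q\<^sup>2 / a\<^sup>2)"
      using L by (simp add: \<tau> field_simps power2_eq_square)
    also have "\<dots> \<le> 2 * sqrt 2 * P * (a * q / 2 * q\<^sup>2 / a\<^sup>2)"
      using Pa P q a by (intro mult_left_mono divide_right_mono mult_right_mono) auto
    also have "\<dots> = sqrt 2 * (q ^ 3 / a) * P"
      using a by (simp add: field_simps power_eq_if)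
    also have "\<dots> \<le> 3 / 2 * (q ^ 3 / a) * P"
      using sqrt2 q a P by (intro mult_right_mono) auto
    finally show ?thesis .
  qed
  moreover have "\<tau> * (L * sqrt (2 / v)) / sqrt \<delta> \<le> 3 / 2 * q * P"
  proof (rule power2_le_imp_le)
    have "(\<tau> * (L * sqrt (2 / v)) / sqrt \<delta>)\<^sup>2 = 4 * P ^ 3 / q"
      using q P L by (simp add: \<tau> v \<delta> field_simps power_eq_if)
    also have "\<dots> \<le> (3 / 2 * q * P)\<^sup>2"
      using Pq q P by (simp add: field_simps power_eq_if power2_eq_square)
    finally show "(\<tau> * (L * sqrt (2 / v)) / sqrt \<delta>)\<^sup>2 \<le> (3 / 2 * q * P)\<^sup>2" .
  qed (use q P in simp)
  moreover have "3 / 2 * q * P + 3 / 2 * (q ^ 3 / a) * P + 3 / 2 * q * P \<le> 7 * (q ^ 3 / a + q) * P"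
    using q a P by (simp add: field_simps)
  ultimately show ?thesis
    by linarith
qed

lemma closeness_quarter_power_bounds:
  fixes l A P :: real
  assumes l: "0 < l" and A: "0 < A"
    and close_A: "P\<^sup>2 \<le> sqrt (A * l) / 4" and close_l: "P\<^sup>2 \<le> l powr (3 / 2) / 8"
  shows "P \<le> A powr (1 / 4) * l powr (1 / 4) / 2" and "P \<le> (l powr (1 / 4)) ^ 3 / 2"
proof -
  define q a where "q = l powr (1 / 4)" and "a = A powr (1 / 4)"
  have q_power: "q ^ n = l powr (real n / 4)" for n
    using powr_quarter_power[OF l] by (simp add: q_def)
  have "A * l = ((a * q)\<^sup>2)\<^sup>2"
    using powr_quarter_power[OF A, of 4] A q_power[of 4] l
    by (simp add: a_def power_mult_distrib flip: power_mult)
  then have "sqrt (A * l) = (a * q / 2)\<^sup>2 * 4"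
    by (simp only: real_sqrt_abs abs_power2) (simp add: power_divide)
  with close_A have "P\<^sup>2 \<le> (a * q / 2)\<^sup>2"
    by simp
  then show "P \<le> A powr (1 / 4) * l powr (1 / 4) / 2"
    unfolding q_def a_def by (rule power2_le_imp_le) (use l A in simp)
  have "P\<^sup>2 \<le> q ^ 6 / 8"
    using close_l q_power[of 6] by simp
  also have "\<dots> \<le> (q ^ 3 / 2)\<^sup>2"
    using l by (simp add: q_def power_divide flip: power_mult)
  finally have "P\<^sup>2 \<le> (q ^ 3 / 2)\<^sup>2" .
  then show "P \<le> (l powr (1 / 4)) ^ 3 / 2"
    unfolding q_def by (rule power2_le_imp_le) (use l in simp)
qed

lemma window_bound_le_powr:
  fixes l A L \<tau> v \<delta> :: real
  assumes l: "0 < l" and A: "0 < A" and L: "0 < L" and \<tau>: "0 < \<tau>"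
    and close_A: "\<tau> * L \<le> sqrt (A * l) / 4" and close_l: "\<tau> * L \<le> l powr (3 / 2) / 8"
    and v: "v = l / (2 * pi)" and \<delta>: "\<delta> = pi * sqrt (L * \<tau>) / l powr (3 / 4)"
  shows "0 < \<delta>" and "\<delta> \<le> pi"
    and "3 * v * \<delta> + \<tau> * (2 * L * sqrt (4 * pi * v / A)) + \<tau> * (L * sqrt (2 / v)) / sqrt \<delta>
      \<le> 7 * (l powr (3 / 4) * A powr (- 1 / 4) + l powr (1 / 4)) * sqrt (L * \<tau>)"
proof -
  define q a P where "q = l powr (1 / 4)" and "a = A powr (1 / 4)" and "P = sqrt (L * \<tau>)"
  have pos: "0 < q" "0 < a" "0 < P"
    using l A L \<tau> by (auto simp: q_def a_def P_def)
  have q_power: "q ^ n = l powr (real n / 4)" for n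
    using powr_quarter_power[OF l] by (simp add: q_def)
  have a4: "a ^ 4 = A"
    using powr_quarter_power[OF A, of 4] A by (simp add: a_def)
  have PP: "\<tau> * L = P\<^sup>2"
    using L \<tau> by (simp add: P_def)
  have "P\<^sup>2 \<le> sqrt (A * l) / 4" "P\<^sup>2 \<le> l powr (3 / 2) / 8"
    using close_A close_l by (simp_all add: PP[symmetric] mult.commute)
  from closeness_quarter_power_bounds[OF l A this]
  have Pa: "P \<le> a * q / 2" and Pq: "P \<le> q ^ 3 / 2"
    by (simp_all add: q_def a_def)
  have \<delta>_q: "\<delta> = pi * P / q ^ 3"
    using q_power[of 3] by (simp add: \<delta> P_def)
  show "0 < \<delta>" "\<delta> \<le> pi"
    using Pq pos by (auto simp: \<delta>_q field_simps)
  have "3 * v * \<delta> + \<tau> * (2 * L * sqrt (4 * pi * v / A)) + \<tau> * (L * sqrt (2 / v)) / sqrt \<delta>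
      \<le> 7 * (q ^ 3 / a + q) * P"
    unfolding a4[symmetric]
    by (rule window_bound_le[OF pos L PP Pa Pq]) (use l in \<open>simp_all add: \<delta>_q v q_power\<close>)
  also have "\<dots> = 7 * (l powr (3 / 4) * A powr (- 1 / 4) + l powr (1 / 4)) * sqrt (L * \<tau>)"
    using q_power[of 3] q_power[of 1] by (simp add: a_def P_def powr_minus_divide)
  finally show "3 * v * \<delta> + \<tau> * (2 * L * sqrt (4 * pi * v / A)) + \<tau> * (L * sqrt (2 / v)) / sqrt \<delta>
      \<le> 7 * (l powr (3 / 4) * A powr (- 1 / 4) + l powr (1 / 4)) * sqrt (L * \<tau>)" .
qed

locale loop_family =
  fixes c c\<^sub>t c\<^sub>\<theta> c\<^sub>\<theta>\<^sub>t c\<^sub>\<theta>\<^sub>\<theta> :: "real \<Rightarrow> real \<Rightarrow> complex"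
  assumes periodic: "\<And>t \<theta>. t \<in> {0..1} \<Longrightarrow> c t (\<theta> + 2 * pi) = c t \<theta>"
    and immersion: "\<And>t \<theta>. t \<in> {0..1} \<Longrightarrow> c\<^sub>\<theta> t \<theta> \<noteq> 0"
    and c_deriv_theta: "\<And>t \<theta>. t \<in> {0..1} \<Longrightarrow> (c t has_vector_derivative c\<^sub>\<theta> t \<theta>) (at \<theta>)"
    and c_deriv_t: "\<And>t \<theta>. t \<in> {0..1} \<Longrightarrow>
      ((\<lambda>s. c s \<theta>) has_vector_derivative c\<^sub>t t \<theta>) (at t within {0..1})"
    and c_theta_deriv_theta: "\<And>t \<theta>. t \<in> {0..1} \<Longrightarrow>
      (c\<^sub>\<theta> t has_vector_derivative c\<^sub>\<theta>\<^sub>\<theta> t \<theta>) (at \<theta>)"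
    and c_theta_deriv_t: "\<And>t \<theta>. t \<in> {0..1} \<Longrightarrow>
      ((\<lambda>s. c\<^sub>\<theta> s \<theta>) has_vector_derivative c\<^sub>\<theta>\<^sub>t t \<theta>) (at t within {0..1})"
    and continuous_c_t: "continuous_on ({0..1} \<times> UNIV) (\<lambda>(t, \<theta>). c\<^sub>t t \<theta>)"
    and continuous_c_theta: "continuous_on ({0..1} \<times> UNIV) (\<lambda>(t, \<theta>). c\<^sub>\<theta> t \<theta>)"
    and continuous_c_theta_t: "continuous_on ({0..1} \<times> UNIV) (\<lambda>(t, \<theta>). c\<^sub>\<theta>\<^sub>t t \<theta>)"
    and continuous_c_theta_theta: "continuous_on ({0..1} \<times> UNIV) (\<lambda>(t, \<theta>). c\<^sub>\<theta>\<^sub>\<theta> t \<theta>)"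
begin

lemma d_theta_eq: "t \<in> {0..1} \<Longrightarrow> d_theta c t \<theta> = c\<^sub>\<theta> t \<theta>"
  unfolding d_theta_def by (rule vector_derivative_at[OF c_deriv_theta])

lemma d_t_eq: "t \<in> {0..1} \<Longrightarrow> d_t c t \<theta> = c\<^sub>t t \<theta>"
  unfolding d_t_def by (rule vector_derivative_within_closed_interval[OF _ _ c_deriv_t]) auto

lemma continuous_on_theta_sections:
  assumes "t \<in> {0..1}"
  shows "continuous_on S (c\<^sub>t t)" "continuous_on S (c\<^sub>\<theta> t)"
    "continuous_on S (c\<^sub>\<theta>\<^sub>t t)" "continuous_on S (c\<^sub>\<theta>\<^sub>\<theta> t)"
  by (rule continuous_on_section_snd[OF _ assms];
      rule continuous_c_t continuous_c_theta continuous_c_theta_t continuous_c_theta_theta)+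

text \<open>Differentiating \<open>c s \<theta> - c s a = \<integral>\<^sub>a\<^sup>\<theta> c\<^sub>\<theta> s\<close> in \<open>s\<close> (Leibniz rule) yields
  the symmetry of the mixed partial derivatives.\<close>

lemma c_t_diff_eq_integral:
  assumes t: "t \<in> {0..1}" and "a \<le> \<theta>"
  shows "c\<^sub>t t \<theta> - c\<^sub>t t a = integral {a..\<theta>} (c\<^sub>\<theta>\<^sub>t t)"
proof -
  have leibniz: "((\<lambda>s. integral (cbox a \<theta>) (c\<^sub>\<theta> s)) has_vector_derivative
      integral (cbox a \<theta>) (c\<^sub>\<theta>\<^sub>t t)) (at t within {0..1})"
  proof (rule leibniz_rule_vector_derivative)
    show "continuous_on ({0..1} \<times> cbox a \<theta>) (\<lambda>(s, u). c\<^sub>\<theta>\<^sub>t s u)"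
      by (rule continuous_on_subset[OF continuous_c_theta_t]) auto
    show "c\<^sub>\<theta> s integrable_on cbox a \<theta>" if "s \<in> {0..1}" for s
      by (rule integrable_continuous) (rule continuous_on_theta_sections(2)[OF that])
  qed (use t in \<open>auto intro: c_theta_deriv_t\<close>)
  have ftc: "integral (cbox a \<theta>) (c\<^sub>\<theta> s) = c s \<theta> - c s a" if "s \<in> {0..1}" for s
  proof -
    have "(c\<^sub>\<theta> s has_integral c s \<theta> - c s a) {a..\<theta>}"
      by (rule fundamental_theorem_of_calculus[OF \<open>a \<le> \<theta>\<close>])
        (auto intro: has_vector_derivative_at_within c_deriv_theta[OF that])
    then show ?thesis
      by (simp add: integral_unique)
  qed
  have "((\<lambda>s. c s \<theta> - c s a) has_vector_derivative integral {a..\<theta>} (c\<^sub>\<theta>\<^sub>t t))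
      (at t within {0..1})"
    using has_vector_derivative_transform[OF t ftc[symmetric] leibniz] by simp
  from vector_derivative_unique_unit_interval[OF t this
      has_vector_derivative_diff[OF c_deriv_t c_deriv_t]]
  show ?thesis
    using t by simp
qed

lemma c_t_deriv_theta:
  assumes t: "t \<in> {0..1}"
  shows "(c\<^sub>t t has_vector_derivative c\<^sub>\<theta>\<^sub>t t \<theta>) (at \<theta>)"
proof -
  have "((\<lambda>u. integral {\<theta> - 1..u} (c\<^sub>\<theta>\<^sub>t t)) has_vector_derivative c\<^sub>\<theta>\<^sub>t t \<theta>)
      (at \<theta> within {\<theta> - 1..\<theta> + 1})"
    by (rule integral_has_vector_derivative[OF continuous_on_theta_sections(3)[OF t]]) auto
  from has_vector_derivative_add[OF has_vector_derivative_const this]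
  have "((\<lambda>u. c\<^sub>t t (\<theta> - 1) + integral {\<theta> - 1..u} (c\<^sub>\<theta>\<^sub>t t)) has_vector_derivative c\<^sub>\<theta>\<^sub>t t \<theta>)
      (at \<theta> within {\<theta> - 1..\<theta> + 1})"
    by simp
  then have "(c\<^sub>t t has_vector_derivative c\<^sub>\<theta>\<^sub>t t \<theta>) (at \<theta> within {\<theta> - 1..\<theta> + 1})"
    by (rule has_vector_derivative_transform[rotated 2])
      (auto simp: c_t_diff_eq_integral[OF t, where a = "\<theta> - 1", symmetric])
  then have "(c\<^sub>t t has_vector_derivative c\<^sub>\<theta>\<^sub>t t \<theta>) (at \<theta> within {\<theta> - 1<..<\<theta> + 1})"
    by (rule has_vector_derivative_within_subset) auto
  then show ?thesis
    by (subst (asm) has_vector_derivative_within_open) auto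
qed

lemma c_theta_periodic:
  assumes t: "t \<in> {0..1}"
  shows "c\<^sub>\<theta> t (\<theta> + 2 * pi) = c\<^sub>\<theta> t \<theta>"
proof -
  have "((c t \<circ> (\<lambda>s. s + 2 * pi)) has_vector_derivative c\<^sub>\<theta> t (\<theta> + 2 * pi)) (at \<theta>)"
    using vector_diff_chain_at[OF
        has_vector_derivative_add[OF has_vector_derivative_id has_vector_derivative_const]
        c_deriv_theta[OF t]]
    by simp
  moreover have "c t \<circ> (\<lambda>s. s + 2 * pi) = c t"
    using periodic[OF t] by (simp add: o_def)
  ultimately show ?thesis
    using c_deriv_theta[OF t] by (auto intro: vector_derivative_unique_at)
qed

lemma c_t_periodic:
  assumes t: "t \<in> {0..1}"
  shows "c\<^sub>t t (\<theta> + 2 * pi) = c\<^sub>t t \<theta>"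
proof -
  have "((\<lambda>s. c s \<theta>) has_vector_derivative c\<^sub>t t (\<theta> + 2 * pi)) (at t within {0..1})"
    using c_deriv_t[OF t, of "\<theta> + 2 * pi"] t
    by (rule has_vector_derivative_transform[rotated 2]) (simp add: periodic)
  from vector_derivative_unique_unit_interval[OF t this c_deriv_t[OF t]]
  show ?thesis .
qed

lemma norm_c_diff_le_integral:
  assumes "a \<le> b" and ab: "{a..b} \<subseteq> {0..1}"
  shows "norm (c b \<theta> - c a \<theta>) \<le> integral {a..b} (\<lambda>s. norm (c\<^sub>t s \<theta>))"
proof -
  have "((\<lambda>s. c\<^sub>t s \<theta>) has_integral c b \<theta> - c a \<theta>) {a..b}"
    using ab by (intro fundamental_theorem_of_calculus[OF \<open>a \<le> b\<close>])
      (auto intro: has_vector_derivative_within_subset[OF c_deriv_t])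
  moreover have "continuous_on {a..b} (\<lambda>s. c\<^sub>t s \<theta>)"
    by (rule continuous_on_section_fst[OF continuous_c_t ab])
  then have "norm (integral {a..b} (\<lambda>s. c\<^sub>t s \<theta>)) \<le> integral {a..b} (\<lambda>s. norm (c\<^sub>t s \<theta>))"
    by (intro integral_norm_bound_integral integrable_continuous_interval continuous_intros) auto
  ultimately show ?thesis
    by (simp add: integral_unique)
qed

lemma continuous_on_norm_c_t:
  assumes "S \<subseteq> {0..1}"
  shows "continuous_on (S \<times> V) (\<lambda>(s, x). norm (c\<^sub>t s x))"
    and "continuous_on (V \<times> S) (\<lambda>(x, s). norm (c\<^sub>t s x))"
proof -
  have c_t: "continuous_on (S \<times> V) (\<lambda>(s, x). c\<^sub>t s x)"
    by (rule continuous_on_subset[OF continuous_c_t]) (use assms in auto)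
  from continuous_on_norm[OF this]
  show norm_c_t: "continuous_on (S \<times> V) (\<lambda>(s, x). norm (c\<^sub>t s x))"
    by (simp add: case_prod_unfold)
  have "continuous_on (V \<times> S) ((\<lambda>(s, x). norm (c\<^sub>t s x)) \<circ> prod.swap)"
    by (intro continuous_on_compose continuous_on_swap) (simp add: product_swap norm_c_t)
  then show "continuous_on (V \<times> S) (\<lambda>(x, s). norm (c\<^sub>t s x))"
    by (simp add: o_def case_prod_unfold)
qed

lemma integral_integral_norm_c_t_swap:
  assumes "{a..b} \<subseteq> {0..1}"
  shows "integral {\<alpha>..\<beta>} (\<lambda>x. integral {a..b} (\<lambda>s. norm (c\<^sub>t s x)))
    = integral {a..b} (\<lambda>s. integral {\<alpha>..\<beta>} (\<lambda>x. norm (c\<^sub>t s x)))"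
  using integral_swap_continuous[of \<alpha> a \<beta> b "\<lambda>x s. norm (c\<^sub>t s x)"]
    continuous_on_norm_c_t(2)[OF assms, of "{\<alpha>..\<beta>}"]
  by (simp add: cbox_Pair_eq)

end

lemma smooth_imm_path_imp_loop_family:
  assumes "smooth_imm_path c"
  obtains c\<^sub>t c\<^sub>\<theta> c\<^sub>\<theta>\<^sub>t c\<^sub>\<theta>\<^sub>\<theta> where "loop_family c c\<^sub>t c\<^sub>\<theta> c\<^sub>\<theta>\<^sub>t c\<^sub>\<theta>\<^sub>\<theta>"
proof -
  let ?S = "{0..1::real} \<times> (UNIV :: real set)"
  have "Ck_on 2 ?S (\<lambda>(t, \<theta>). c t \<theta>)"
    using assms by (simp add: smooth_imm_path_def smooth2_on_def)
  then obtain D where D: "\<And>p. p \<in> ?S \<Longrightarrow> ((\<lambda>(t, \<theta>). c t \<theta>) has_derivative D p) (at p within ?S)"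
    and D_t: "Ck_on 1 ?S (\<lambda>p. D p (1, 0))" and D_\<theta>: "Ck_on 1 ?S (\<lambda>p. D p (0, 1))"
    by (auto simp: numeral_2_eq_2)
  from D_\<theta> obtain E where E: "\<And>p. p \<in> ?S \<Longrightarrow> ((\<lambda>p. D p (0, 1)) has_derivative E p) (at p within ?S)"
    and E_t: "Ck_on 0 ?S (\<lambda>p. E p (1, 0))" and E_\<theta>: "Ck_on 0 ?S (\<lambda>p. E p (0, 1))"
    by auto
  define c\<^sub>t c\<^sub>\<theta> c\<^sub>\<theta>\<^sub>t c\<^sub>\<theta>\<^sub>\<theta> where "c\<^sub>t t \<theta> = D (t, \<theta>) (1, 0)" and "c\<^sub>\<theta> t \<theta> = D (t, \<theta>) (0, 1)"
    and "c\<^sub>\<theta>\<^sub>t t \<theta> = E (t, \<theta>) (1, 0)" and "c\<^sub>\<theta>\<^sub>\<theta> t \<theta> = E (t, \<theta>) (0, 1)" for t \<theta>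
  note partials =
    has_derivative_imp_partial_derivatives[OF D] has_derivative_imp_partial_derivatives[OF E]
  have c_theta: "(c t has_vector_derivative c\<^sub>\<theta> t \<theta>) (at \<theta>)" if "t \<in> {0..1}" for t \<theta>
    using partials(1)[of t \<theta>] that by (simp add: c\<^sub>\<theta>_def)
  show ?thesis
  proof (rule that[of c\<^sub>t c\<^sub>\<theta> c\<^sub>\<theta>\<^sub>t c\<^sub>\<theta>\<^sub>\<theta>], unfold_locales)
    show "c t (\<theta> + 2 * pi) = c t \<theta>" if "t \<in> {0..1}" for t \<theta>
      using assms that by (simp add: smooth_imm_path_def)
    show "c\<^sub>\<theta> t \<theta> \<noteq> 0" if "t \<in> {0..1}" for t \<theta>
    proof -
      have "d_theta c t \<theta> \<noteq> 0"
        using assms that by (simp add: smooth_imm_path_def)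
      then show ?thesis
        using vector_derivative_at[OF c_theta[OF that, of \<theta>]] by (simp add: d_theta_def)
    qed
    show "(c t has_vector_derivative c\<^sub>\<theta> t \<theta>) (at \<theta>)" if "t \<in> {0..1}" for t \<theta>
      using c_theta[OF that] .
    show "((\<lambda>s. c s \<theta>) has_vector_derivative c\<^sub>t t \<theta>) (at t within {0..1})" if "t \<in> {0..1}" for t \<theta>
      using partials(2)[of t \<theta>] that by (simp add: c\<^sub>t_def)
    show "(c\<^sub>\<theta> t has_vector_derivative c\<^sub>\<theta>\<^sub>\<theta> t \<theta>) (at \<theta>)" if "t \<in> {0..1}" for t \<theta>
      using partials(3)[of t \<theta>] that by (simp add: c\<^sub>\<theta>_def[abs_def] c\<^sub>\<theta>\<^sub>\<theta>_def)
    show "((\<lambda>s. c\<^sub>\<theta> s \<theta>) has_vector_derivative c\<^sub>\<theta>\<^sub>t t \<theta>) (at t within {0..1})"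
      if "t \<in> {0..1}" for t \<theta>
      using partials(4)[of t \<theta>] that by (simp add: c\<^sub>\<theta>_def c\<^sub>\<theta>\<^sub>t_def)
    show "continuous_on ?S (\<lambda>(t, \<theta>). c\<^sub>t t \<theta>)" "continuous_on ?S (\<lambda>(t, \<theta>). c\<^sub>\<theta> t \<theta>)"
      "continuous_on ?S (\<lambda>(t, \<theta>). c\<^sub>\<theta>\<^sub>t t \<theta>)" "continuous_on ?S (\<lambda>(t, \<theta>). c\<^sub>\<theta>\<^sub>\<theta> t \<theta>)"
      using Ck_on_imp_continuous_on[OF D_t] Ck_on_imp_continuous_on[OF D_\<theta>]
        Ck_on_imp_continuous_on[OF E_t] Ck_on_imp_continuous_on[OF E_\<theta>]
      by (simp_all add: c\<^sub>t_def c\<^sub>\<theta>_def c\<^sub>\<theta>\<^sub>t_def c\<^sub>\<theta>\<^sub>\<theta>_def case_prod_unfold)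
  qed
qed

locale constant_speed_path = loop_family +
  fixes A L :: real
  assumes A_pos: "A > 0" and L_pos: "L > 0"
    and constant_speed: "\<And>t \<theta>. t \<in> {0..1} \<Longrightarrow> norm (c\<^sub>\<theta> t \<theta>) = curve_length c t / (2 * pi)"
    and tangential_at_0: "\<And>t. t \<in> {0..1} \<Longrightarrow> inner (c\<^sub>t t 0) (c\<^sub>\<theta> t 0) = 0"
    and energy: "\<And>t. t \<in> {0..1} \<Longrightarrow>
      integral {0..2 * pi} (\<lambda>\<theta>. (1 + A * (curvature c t \<theta>)\<^sup>2)
        * (inner (c\<^sub>t t \<theta>) (\<i> * c\<^sub>\<theta> t \<theta>))\<^sup>2 / norm (c\<^sub>\<theta> t \<theta>)) = L\<^sup>2"
begin

definition speed :: "real \<Rightarrow> real"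
  where "speed t = curve_length c t / (2 * pi)"

definition normal_comp :: "real \<Rightarrow> real \<Rightarrow> real"
  where "normal_comp t \<theta> = inner (c\<^sub>t t \<theta>) (\<i> * c\<^sub>\<theta> t \<theta>)"

definition bending :: "real \<Rightarrow> real"
  where "bending t = integral {0..2 * pi} (\<lambda>\<theta>. \<bar>curvature c t \<theta> * normal_comp t \<theta>\<bar>)"

text \<open>\<open>stretch t\<close> is half the time derivative of \<open>(speed t)\<^sup>2\<close>; by constant speed it can
  be computed at any angle (\<open>inner_c_theta_t_c_theta\<close>).\<close>

definition stretch :: "real \<Rightarrow> real"
  where "stretch t = inner (c\<^sub>\<theta>\<^sub>t t 0) (c\<^sub>\<theta> t 0)"

lemma norm_c_theta: "t \<in> {0..1} \<Longrightarrow> norm (c\<^sub>\<theta> t \<theta>) = speed t"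
  by (simp add: constant_speed speed_def)

lemma speed_pos: "t \<in> {0..1} \<Longrightarrow> speed t > 0"
  using norm_c_theta[of t 0] immersion[of t 0] by (metis zero_less_norm_iff)

lemma curve_length_eq: "curve_length c t = 2 * pi * speed t"
  by (simp add: speed_def)

lemma curvature_eq:
  assumes t: "t \<in> {0..1}"
  shows "curvature c t \<theta> = Im (cnj (c\<^sub>\<theta> t \<theta>) * c\<^sub>\<theta>\<^sub>\<theta> t \<theta>) / speed t ^ 3"
proof -
  have "d_theta c t = c\<^sub>\<theta> t"
    using d_theta_eq[OF t] by auto
  then show ?thesis
    unfolding curvature_def
    by (simp add: d_theta_eq[OF t] norm_c_theta[OF t]
        vector_derivative_at[OF c_theta_deriv_theta[OF t]])
qed

lemma continuous_on_curvature_normal_comp: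
  assumes t: "t \<in> {0..1}"
  shows "continuous_on S (curvature c t)" "continuous_on S (normal_comp t)"
proof -
  show "continuous_on S (curvature c t)"
    unfolding curvature_eq[OF t, abs_def]
    by (intro continuous_intros continuous_on_theta_sections[OF t]) (use speed_pos[OF t] in auto)
  show "continuous_on S (normal_comp t)"
    unfolding normal_comp_def[abs_def]
    by (intro continuous_intros continuous_on_theta_sections[OF t])
qed

lemma weighted_energy:
  assumes t: "t \<in> {0..1}"
  shows "integral {0..2 * pi} (\<lambda>\<theta>. (1 + A * (curvature c t \<theta>)\<^sup>2) * (normal_comp t \<theta>)\<^sup>2)
    = speed t * L\<^sup>2"
proof -
  let ?f = "\<lambda>\<theta>. (1 + A * (curvature c t \<theta>)\<^sup>2) * (normal_comp t \<theta>)\<^sup>2"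
  have "integral {0..2 * pi} (\<lambda>\<theta>. ?f \<theta> / speed t) = L\<^sup>2"
    using energy[OF t] by (simp add: normal_comp_def norm_c_theta[OF t])
  then show ?thesis
    using speed_pos[OF t] by (simp add: field_simps)
qed

lemma integral_normal_comp_squared_le:
  assumes t: "t \<in> {0..1}"
  shows "integral {0..2 * pi} (\<lambda>\<theta>. (normal_comp t \<theta>)\<^sup>2) \<le> speed t * L\<^sup>2"
proof -
  have "integral {0..2 * pi} (\<lambda>\<theta>. (normal_comp t \<theta>)\<^sup>2)
      \<le> integral {0..2 * pi} (\<lambda>\<theta>. (1 + A * (curvature c t \<theta>)\<^sup>2) * (normal_comp t \<theta>)\<^sup>2)"
    using A_pos
    by (intro integral_le integrable_continuous_interval continuous_intros
        continuous_on_curvature_normal_comp[OF t]) (simp add: algebra_simps)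
  then show ?thesis
    by (simp add: weighted_energy[OF t])
qed

lemma integral_curvature_normal_comp_squared_le:
  assumes t: "t \<in> {0..1}"
  shows "integral {0..2 * pi} (\<lambda>\<theta>. (curvature c t \<theta> * normal_comp t \<theta>)\<^sup>2) \<le> speed t * L\<^sup>2 / A"
proof -
  have "A * integral {0..2 * pi} (\<lambda>\<theta>. (curvature c t \<theta> * normal_comp t \<theta>)\<^sup>2)
      = integral {0..2 * pi} (\<lambda>\<theta>. A * (curvature c t \<theta> * normal_comp t \<theta>)\<^sup>2)"
    by simp
  also have "\<dots> \<le> integral {0..2 * pi} (\<lambda>\<theta>. (1 + A * (curvature c t \<theta>)\<^sup>2) * (normal_comp t \<theta>)\<^sup>2)"
    by (intro integral_le integrable_continuous_interval continuous_intros
        continuous_on_curvature_normal_comp[OF t]) (simp add: algebra_simps)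
  also have "\<dots> = speed t * L\<^sup>2"
    by (rule weighted_energy[OF t])
  finally show ?thesis
    using A_pos by (simp add: field_simps)
qed

lemma bending_le:
  assumes t: "t \<in> {0..1}"
  shows "bending t \<le> L * sqrt (2 * pi * speed t / A)"
proof -
  have "(bending t)\<^sup>2 \<le> 2 * pi * integral {0..2 * pi} (\<lambda>\<theta>. (curvature c t \<theta> * normal_comp t \<theta>)\<^sup>2)"
    unfolding bending_def
    by (intro integral_abs_squared_le[of 0 "2 * pi", simplified] continuous_intros
        continuous_on_curvature_normal_comp[OF t])
  also have "\<dots> \<le> 2 * pi * (speed t * L\<^sup>2 / A)"
    by (intro mult_left_mono integral_curvature_normal_comp_squared_le[OF t]) simp
  also have "\<dots> = (L * sqrt (2 * pi * speed t / A))\<^sup>2"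
    using speed_pos[OF t] A_pos by (simp add: power_mult_distrib)
  finally show ?thesis
    by (rule power2_le_imp_le) (use L_pos A_pos speed_pos[OF t] in simp)
qed

lemma inner_c_theta_t_c_theta:
  assumes t: "t \<in> {0..1}"
  shows "inner (c\<^sub>\<theta>\<^sub>t t \<theta>) (c\<^sub>\<theta> t \<theta>) = stretch t"
proof -
  have deriv: "((\<lambda>s. inner (c\<^sub>\<theta> s x) (c\<^sub>\<theta> s x)) has_vector_derivative
      2 * inner (c\<^sub>\<theta>\<^sub>t t x) (c\<^sub>\<theta> t x)) (at t within {0..1})" for x
    by (rule has_vector_derivative_eq_rhs[OF bounded_bilinear.has_vector_derivative[OF
          bounded_bilinear_inner c_theta_deriv_t[OF t] c_theta_deriv_t[OF t]]])
      (metis inner_commute mult_2)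
  have "inner (c\<^sub>\<theta> s 0) (c\<^sub>\<theta> s 0) = inner (c\<^sub>\<theta> s \<theta>) (c\<^sub>\<theta> s \<theta>)" if "s \<in> {0..1}" for s
    using norm_c_theta[OF that] by (simp flip: power2_norm_eq_inner)
  from has_vector_derivative_transform[OF t this deriv[of \<theta>]]
  have "((\<lambda>s. inner (c\<^sub>\<theta> s 0) (c\<^sub>\<theta> s 0)) has_vector_derivative
      2 * inner (c\<^sub>\<theta>\<^sub>t t \<theta>) (c\<^sub>\<theta> t \<theta>)) (at t within {0..1})" .
  from vector_derivative_unique_unit_interval[OF t this deriv[of 0]]
  show ?thesis
    by (simp add: stretch_def)
qed

lemma inner_c_theta_theta_c_theta:
  assumes t: "t \<in> {0..1}"
  shows "inner (c\<^sub>\<theta>\<^sub>\<theta> t \<theta>) (c\<^sub>\<theta> t \<theta>) = 0"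
proof -
  have "((\<lambda>s. inner (c\<^sub>\<theta> t s) (c\<^sub>\<theta> t s)) has_vector_derivative
      2 * inner (c\<^sub>\<theta>\<^sub>\<theta> t \<theta>) (c\<^sub>\<theta> t \<theta>)) (at \<theta>)"
    by (rule has_vector_derivative_eq_rhs[OF bounded_bilinear.has_vector_derivative[OF
          bounded_bilinear_inner c_theta_deriv_theta[OF t] c_theta_deriv_theta[OF t]]])
      (metis inner_commute mult_2)
  moreover have "(\<lambda>s. inner (c\<^sub>\<theta> t s) (c\<^sub>\<theta> t s)) = (\<lambda>s. (speed t)\<^sup>2)"
    using norm_c_theta[OF t] by (simp flip: power2_norm_eq_inner)
  ultimately have "((\<lambda>s. (speed t)\<^sup>2) has_vector_derivative 2 * inner (c\<^sub>\<theta>\<^sub>\<theta> t \<theta>) (c\<^sub>\<theta> t \<theta>)) (at \<theta>)"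
    by simp
  from vector_derivative_unique_at[OF this has_vector_derivative_const]
  show ?thesis
    by simp
qed

lemma inner_c_t_c_theta_theta:
  assumes t: "t \<in> {0..1}"
  shows "inner (c\<^sub>t t \<theta>) (c\<^sub>\<theta>\<^sub>\<theta> t \<theta>) = curvature c t \<theta> * speed t * normal_comp t \<theta>"
proof -
  define I where "I = Im (cnj (c\<^sub>\<theta> t \<theta>) * c\<^sub>\<theta>\<^sub>\<theta> t \<theta>)"
  have "inner (c\<^sub>t t \<theta>) (c\<^sub>\<theta>\<^sub>\<theta> t \<theta>) * (speed t)\<^sup>2 = I * normal_comp t \<theta>"
    using inner_of_orthogonal_complex[OF inner_c_theta_theta_c_theta[OF t]]
    by (simp add: I_def normal_comp_def norm_c_theta[OF t])
  then show ?thesis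
    unfolding curvature_eq[OF t] I_def[symmetric]
    using speed_pos[OF t] by (simp add: field_simps power2_eq_square power3_eq_cube)
qed

lemma inner_c_t_c_theta_eq:
  assumes t: "t \<in> {0..1}" and "0 \<le> \<theta>"
  shows "inner (c\<^sub>t t \<theta>) (c\<^sub>\<theta> t \<theta>)
    = speed t * integral {0..\<theta>} (\<lambda>u. curvature c t u * normal_comp t u) + \<theta> * stretch t"
proof -
  let ?f = "\<lambda>u. speed t * (curvature c t u * normal_comp t u) + stretch t"
  have "((\<lambda>u. inner (c\<^sub>t t u) (c\<^sub>\<theta> t u)) has_vector_derivative ?f u) (at u)" for u
    by (rule has_vector_derivative_eq_rhs[OF bounded_bilinear.has_vector_derivative[OF
          bounded_bilinear_inner c_t_deriv_theta[OF t] c_theta_deriv_theta[OF t]]])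
      (simp add: inner_c_t_c_theta_theta[OF t] inner_c_theta_t_c_theta[OF t])
  then have "(?f has_integral inner (c\<^sub>t t \<theta>) (c\<^sub>\<theta> t \<theta>) - inner (c\<^sub>t t 0) (c\<^sub>\<theta> t 0)) {0..\<theta>}"
    by (intro fundamental_theorem_of_calculus[OF \<open>0 \<le> \<theta>\<close>])
      (auto intro: has_vector_derivative_at_within)
  moreover have "((\<lambda>u. curvature c t u * normal_comp t u) has_integral
      integral {0..\<theta>} (\<lambda>u. curvature c t u * normal_comp t u)) {0..\<theta>}"
    by (intro integrable_integral integrable_continuous_interval continuous_intros
        continuous_on_curvature_normal_comp[OF t])
  from has_integral_add[OF has_integral_mult_right[OF this]
      has_integral_const_real[of "stretch t" 0 \<theta>]]
  have "(?f has_integral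
      speed t * integral {0..\<theta>} (\<lambda>u. curvature c t u * normal_comp t u) + \<theta> * stretch t) {0..\<theta>}"
    using \<open>0 \<le> \<theta>\<close> by simp
  ultimately show ?thesis
    using tangential_at_0[OF t] by (simp add: has_integral_unique)
qed

lemma abs_integral_curvature_normal_comp_le:
  assumes t: "t \<in> {0..1}" and \<theta>: "\<theta> \<in> {0..2 * pi}"
  shows "\<bar>integral {0..\<theta>} (\<lambda>u. curvature c t u * normal_comp t u)\<bar> \<le> bending t"
proof -
  have "norm (integral {0..\<theta>} (\<lambda>u. curvature c t u * normal_comp t u))
      \<le> integral {0..\<theta>} (\<lambda>u. \<bar>curvature c t u * normal_comp t u\<bar>)"
    by (intro integral_norm_bound_integral integrable_continuous_interval continuous_intros
        continuous_on_curvature_normal_comp[OF t]) auto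
  also have "\<dots> \<le> bending t"
    unfolding bending_def using \<theta>
    by (intro integral_subset_le integrable_continuous_interval continuous_intros
        continuous_on_curvature_normal_comp[OF t]) auto
  finally show ?thesis
    by simp
qed

text \<open>The tangential component \<open>inner (c\<^sub>t t \<theta>) (c\<^sub>\<theta> t \<theta>)\<close> vanishes at \<open>\<theta> = 0\<close>
  and is periodic, so its \<open>\<theta>\<close>-derivative has mean zero.\<close>

lemma abs_stretch_le:
  assumes t: "t \<in> {0..1}"
  shows "\<bar>stretch t\<bar> \<le> speed t * bending t / (2 * pi)"
proof -
  have "speed t * integral {0..2 * pi} (\<lambda>u. curvature c t u * normal_comp t u)
      = - (2 * pi * stretch t)"
    using inner_c_t_c_theta_eq[OF t, of "2 * pi"] tangential_at_0[OF t]
      c_t_periodic[OF t, of 0] c_theta_periodic[OF t, of 0] by simp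
  then have "2 * pi * \<bar>stretch t\<bar>
      = \<bar>speed t * integral {0..2 * pi} (\<lambda>u. curvature c t u * normal_comp t u)\<bar>"
    by (simp add: abs_mult)
  also have "\<dots> = speed t * \<bar>integral {0..2 * pi} (\<lambda>u. curvature c t u * normal_comp t u)\<bar>"
    using speed_pos[OF t] by (simp add: abs_mult)
  also have "\<dots> \<le> speed t * bending t"
    using abs_integral_curvature_normal_comp_le[OF t, of "2 * pi"] speed_pos[OF t] by simp
  finally show ?thesis
    by (simp add: field_simps)
qed

lemma abs_inner_c_t_c_theta_le:
  assumes t: "t \<in> {0..1}" and \<theta>: "\<theta> \<in> {0..2 * pi}"
  shows "\<bar>inner (c\<^sub>t t \<theta>) (c\<^sub>\<theta> t \<theta>)\<bar> \<le> 2 * speed t * bending t"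
proof -
  have "\<bar>\<theta> * stretch t\<bar> = \<theta> * \<bar>stretch t\<bar>"
    using \<theta> by (simp add: abs_mult)
  also have "\<dots> \<le> 2 * pi * (speed t * bending t / (2 * pi))"
    using \<theta> abs_stretch_le[OF t] by (intro mult_mono) auto
  finally have "\<bar>\<theta> * stretch t\<bar> \<le> speed t * bending t"
    by simp
  moreover have "\<bar>speed t * integral {0..\<theta>} (\<lambda>u. curvature c t u * normal_comp t u)\<bar>
      \<le> speed t * bending t"
    using abs_integral_curvature_normal_comp_le[OF t \<theta>] speed_pos[OF t] by (simp add: abs_mult)
  ultimately show ?thesis
    using \<theta> abs_triangle_ineq by (simp add: inner_c_t_c_theta_eq[OF t])
qed

lemma norm_c_t_le:
  assumes t: "t \<in> {0..1}" and \<theta>: "\<theta> \<in> {0..2 * pi}"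
  shows "norm (c\<^sub>t t \<theta>) \<le> 2 * bending t + \<bar>normal_comp t \<theta>\<bar> / speed t"
proof -
  have "norm (c\<^sub>t t \<theta>) * speed t \<le> 2 * speed t * bending t + \<bar>normal_comp t \<theta>\<bar>"
    using norm_mult_le_abs_inner_add_abs_inner[of "c\<^sub>t t \<theta>" "c\<^sub>\<theta> t \<theta>"]
      abs_inner_c_t_c_theta_le[OF t \<theta>]
    by (simp add: norm_c_theta[OF t] normal_comp_def)
  then show ?thesis
    using speed_pos[OF t] by (simp add: field_simps)
qed

lemma integral_abs_normal_comp_window_le:
  assumes t: "t \<in> {0..1}" and "0 \<le> \<alpha>" "\<alpha> + \<delta> \<le> 2 * pi" "0 \<le> \<delta>"
  shows "integral {\<alpha>..\<alpha> + \<delta>} (\<lambda>\<theta>. \<bar>normal_comp t \<theta>\<bar>) \<le> sqrt \<delta> * L * sqrt (speed t)"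
proof -
  have "(integral {\<alpha>..\<alpha> + \<delta>} (\<lambda>\<theta>. \<bar>normal_comp t \<theta>\<bar>))\<^sup>2
      \<le> \<delta> * integral {\<alpha>..\<alpha> + \<delta>} (\<lambda>\<theta>. (normal_comp t \<theta>)\<^sup>2)"
    using integral_abs_squared_le[OF continuous_on_curvature_normal_comp(2)[OF t],
        where a = \<alpha> and b = "\<alpha> + \<delta>"] by simp
  also have "\<dots> \<le> \<delta> * integral {0..2 * pi} (\<lambda>\<theta>. (normal_comp t \<theta>)\<^sup>2)"
    using assms by (intro mult_left_mono integral_subset_le integrable_continuous_interval
        continuous_intros continuous_on_curvature_normal_comp(2)[OF t]) auto
  also have "\<dots> \<le> \<delta> * (speed t * L\<^sup>2)"
    using \<open>0 \<le> \<delta>\<close> by (intro mult_left_mono integral_normal_comp_squared_le[OF t])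
  also have "\<dots> = (sqrt \<delta> * L * sqrt (speed t))\<^sup>2"
    using \<open>0 \<le> \<delta>\<close> speed_pos[OF t] by (simp add: power_mult_distrib)
  finally show ?thesis
    by (rule power2_le_imp_le) (use L_pos speed_pos[OF t] \<open>0 \<le> \<delta>\<close> in simp)
qed

lemma integral_norm_c_t_window_le:
  assumes t: "t \<in> {0..1}" and window: "0 \<le> \<alpha>" "\<alpha> + \<delta> \<le> 2 * pi" "0 \<le> \<delta>"
  shows "integral {\<alpha>..\<alpha> + \<delta>} (\<lambda>\<theta>. norm (c\<^sub>t t \<theta>))
    \<le> \<delta> * (2 * bending t) + sqrt \<delta> * (L / sqrt (speed t))"
proof -
  have integrable: "(\<lambda>\<theta>. \<bar>normal_comp t \<theta>\<bar>) integrable_on {\<alpha>..\<alpha> + \<delta>}"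
    by (intro integrable_continuous_interval continuous_intros
        continuous_on_curvature_normal_comp(2)[OF t])
  have "integral {\<alpha>..\<alpha> + \<delta>} (\<lambda>\<theta>. norm (c\<^sub>t t \<theta>))
      \<le> integral {\<alpha>..\<alpha> + \<delta>} (\<lambda>\<theta>. 2 * bending t + \<bar>normal_comp t \<theta>\<bar> / speed t)"
  proof (rule integral_le)
    show "(\<lambda>\<theta>. norm (c\<^sub>t t \<theta>)) integrable_on {\<alpha>..\<alpha> + \<delta>}"
      by (intro integrable_continuous_interval continuous_intros continuous_on_theta_sections[OF t])
    show "(\<lambda>\<theta>. 2 * bending t + \<bar>normal_comp t \<theta>\<bar> / speed t) integrable_on {\<alpha>..\<alpha> + \<delta>}"
      using integrable by (intro integrable_add integrable_const_ivl integrable_on_divide)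
  qed (use window norm_c_t_le[OF t] in auto)
  also have "\<dots> = \<delta> * (2 * bending t) + integral {\<alpha>..\<alpha> + \<delta>} (\<lambda>\<theta>. \<bar>normal_comp t \<theta>\<bar>) / speed t"
    by (subst integral_add) (use integrable window in \<open>auto intro: integrable_on_divide\<close>)
  also have "\<dots> \<le> \<delta> * (2 * bending t) + sqrt \<delta> * L * sqrt (speed t) / speed t"
    using integral_abs_normal_comp_window_le[OF t window] speed_pos[OF t]
    by (simp add: divide_right_mono)
  also have "sqrt \<delta> * L * sqrt (speed t) / speed t = sqrt \<delta> * (L / sqrt (speed t))"
    using speed_pos[OF t] by (simp add: field_simps)
  finally show ?thesis .
qed

lemma sqrt_speed_has_derivative:
  assumes t: "t \<in> {0..1}"
  shows "((\<lambda>s. sqrt (speed s)) has_real_derivative stretch t / (2 * speed t * sqrt (speed t)))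
    (at t within {0..1})"
proof -
  have speed_eq: "speed s = sqrt (inner (c\<^sub>\<theta> s 0) (c\<^sub>\<theta> s 0))" if "s \<in> {0..1}" for s
    using norm_c_theta[OF that, of 0] by (simp add: norm_eq_sqrt_inner)
  have pos: "0 < inner (c\<^sub>\<theta> t 0) (c\<^sub>\<theta> t 0)"
    using speed_pos[OF t] by (simp add: speed_eq[OF t])
  have "((\<lambda>s. inner (c\<^sub>\<theta> s 0) (c\<^sub>\<theta> s 0)) has_real_derivative 2 * stretch t) (at t within {0..1})"
    unfolding has_real_derivative_iff_has_vector_derivative stretch_def
    by (rule has_vector_derivative_eq_rhs[OF bounded_bilinear.has_vector_derivative[OF
          bounded_bilinear_inner c_theta_deriv_t[OF t] c_theta_deriv_t[OF t]]])
      (metis inner_commute mult_2)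
  from DERIV_chain'[OF this DERIV_real_sqrt[OF pos]]
  have "((\<lambda>s. sqrt (inner (c\<^sub>\<theta> s 0) (c\<^sub>\<theta> s 0))) has_real_derivative
      inverse (speed t) / 2 * (2 * stretch t)) (at t within {0..1})"
    by (simp only: speed_eq[OF t])
  moreover have "0 < sqrt (inner (c\<^sub>\<theta> t 0) (c\<^sub>\<theta> t 0))"
    using speed_pos[OF t] by (simp only: speed_eq[OF t])
  ultimately have "((\<lambda>s. sqrt (sqrt (inner (c\<^sub>\<theta> s 0) (c\<^sub>\<theta> s 0)))) has_real_derivative
      inverse (sqrt (sqrt (inner (c\<^sub>\<theta> t 0) (c\<^sub>\<theta> t 0)))) / 2
        * (inverse (speed t) / 2 * (2 * stretch t)))
      (at t within {0..1})"
    by (rule DERIV_chain'[OF _ DERIV_real_sqrt])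
  then have deriv: "((\<lambda>s. sqrt (sqrt (inner (c\<^sub>\<theta> s 0) (c\<^sub>\<theta> s 0)))) has_real_derivative
      inverse (sqrt (speed t)) / 2 * (inverse (speed t) / 2 * (2 * stretch t)))
      (at t within {0..1})"
    by (simp only: speed_eq[OF t])
  have eq: "inverse (sqrt (speed t)) / 2 * (inverse (speed t) / 2 * (2 * stretch t))
      = stretch t / (2 * speed t * sqrt (speed t))"
    using speed_pos[OF t] by (simp add: field_simps)
  from deriv[unfolded eq] show ?thesis
    by (rule has_field_derivative_transform_within[OF _ zero_less_one t]) (simp add: speed_eq)
qed

lemma sqrt_speed_lipschitz:
  assumes s: "s \<in> {0..1}" and t: "t \<in> {0..1}"
  shows "\<bar>sqrt (speed s) - sqrt (speed t)\<bar> \<le> L / (4 * sqrt A) * \<bar>s - t\<bar>"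
proof -
  have "\<bar>stretch u / (2 * speed u * sqrt (speed u))\<bar> \<le> L / (4 * sqrt A)" if u: "u \<in> {0..1}" for u
  proof -
    have "\<bar>stretch u / (2 * speed u * sqrt (speed u))\<bar> \<le> bending u / (4 * pi * sqrt (speed u))"
      using abs_stretch_le[OF u] speed_pos[OF u]
      by (simp add: abs_mult field_simps)
    also have "\<dots> \<le> L * sqrt (2 * pi * speed u / A) / (4 * pi * sqrt (speed u))"
      using bending_le[OF u] speed_pos[OF u] by (simp add: divide_right_mono)
    also have "\<dots> = L * sqrt (2 * pi) / (4 * pi * sqrt A)"
      using speed_pos[OF u] A_pos by (simp add: real_sqrt_mult real_sqrt_divide)
    also have "\<dots> \<le> L * pi / (4 * pi * sqrt A)"
    proof -
      have "2 * pi \<le> pi\<^sup>2"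
        using pi_gt3 by (simp add: power2_eq_square)
      then have "sqrt (2 * pi) \<le> pi"
        by (simp add: real_le_lsqrt)
      then show ?thesis
        using L_pos A_pos by (intro divide_right_mono mult_left_mono) auto
    qed
    also have "\<dots> = L / (4 * sqrt A)"
      by simp
    finally show ?thesis .
  qed
  then have "norm (sqrt (speed s) - sqrt (speed t)) \<le> L / (4 * sqrt A) * norm (s - t)"
    using sqrt_speed_has_derivative s t
    by (intro field_differentiable_bound[where S = "{0..1}"
          and f' = "\<lambda>u. stretch u / (2 * speed u * sqrt (speed u))"]) auto
  then show ?thesis
    by simp
qed

lemma c_lipschitz_theta:
  assumes t: "t \<in> {0..1}"
  shows "norm (c t x - c t y) \<le> speed t * \<bar>x - y\<bar>"
proof -
  have "norm (c t x - c t y) \<le> speed t * norm (x - y)"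
  proof (rule differentiable_bound[where S = UNIV and f' = "\<lambda>z h. h *\<^sub>R c\<^sub>\<theta> t z"])
    show "(c t has_derivative (\<lambda>h. h *\<^sub>R c\<^sub>\<theta> t z)) (at z within UNIV)" for z
      using c_deriv_theta[OF t] by (simp add: has_vector_derivative_def)
    show "onorm (\<lambda>h. h *\<^sub>R c\<^sub>\<theta> t z) \<le> speed t" for z
      by (simp add: onorm_scaleR_left[OF bounded_linear_ident] onorm_id norm_c_theta[OF t])
  qed auto
  then show ?thesis
    by simp
qed

lemma norm_c_time_diff_le_nearby_angle:
  assumes t1: "t1 \<in> {0..1}" and t2: "t2 \<in> {0..1}" and "\<bar>x - \<theta>\<bar> \<le> \<delta>"
  shows "norm (c t1 \<theta> - c t2 \<theta>)
    \<le> (speed t1 + speed t2) * \<delta> + integral {min t1 t2..max t1 t2} (\<lambda>s. norm (c\<^sub>t s x))"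
proof -
  have "norm (c t1 \<theta> - c t1 x) \<le> speed t1 * \<delta>" "norm (c t2 x - c t2 \<theta>) \<le> speed t2 * \<delta>"
    using assms abs_minus_commute[of x \<theta>] c_lipschitz_theta[OF t1, of \<theta> x]
      c_lipschitz_theta[OF t2, of x \<theta>] speed_pos[OF t1] speed_pos[OF t2]
    by (metis mult_left_mono less_imp_le order_trans)+
  moreover have "norm (c t1 x - c t2 x) \<le> integral {min t1 t2..max t1 t2} (\<lambda>s. norm (c\<^sub>t s x))"
    using norm_c_diff_le_integral[of "min t1 t2" "max t1 t2" x] t1 t2
    by (cases "t1 \<le> t2") (auto simp: norm_minus_commute)
  moreover have "norm (c t1 \<theta> - c t2 \<theta>)
      \<le> norm (c t1 \<theta> - c t1 x) + norm (c t1 x - c t2 x) + norm (c t2 x - c t2 \<theta>)"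
    by norm
  ultimately show ?thesis
    by (simp add: algebra_simps)
qed

text \<open>Average \<open>norm_c_time_diff_le_nearby_angle\<close> over a window of angles of width \<open>\<delta>\<close>
  containing \<open>\<theta>\<close>, then swap the two integrals.\<close>

lemma norm_c_time_diff_le_window_average:
  assumes t1: "t1 \<in> {0..1}" and t2: "t2 \<in> {0..1}" and \<theta>: "\<theta> \<in> {0..2 * pi}"
    and \<delta>: "0 < \<delta>" "\<delta> \<le> pi"
    and window: "\<And>s \<alpha>. s \<in> {min t1 t2..max t1 t2} \<Longrightarrow> 0 \<le> \<alpha> \<Longrightarrow> \<alpha> + \<delta> \<le> 2 * pi \<Longrightarrow>
      integral {\<alpha>..\<alpha> + \<delta>} (\<lambda>x. norm (c\<^sub>t s x)) \<le> B"
  shows "norm (c t1 \<theta> - c t2 \<theta>) \<le> (speed t1 + speed t2) * \<delta> + \<bar>t1 - t2\<bar> * B / \<delta>"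
proof -
  define a b where "a = min t1 t2" and "b = max t1 t2"
  have ab: "a \<le> b" "{a..b} \<subseteq> {0..1}" "b - a = \<bar>t1 - t2\<bar>"
    using t1 t2 by (auto simp: a_def b_def)
  obtain \<alpha> where \<alpha>: "0 \<le> \<alpha>" "\<alpha> + \<delta> \<le> 2 * pi" "\<theta> \<in> {\<alpha>..\<alpha> + \<delta>}"
    using \<theta> \<delta> by (cases "\<theta> \<le> pi") (auto intro: that[of \<theta>] that[of "\<theta> - \<delta>"])
  define g where "g x = integral {a..b} (\<lambda>s. norm (c\<^sub>t s x))" for x
  let ?V = "(speed t1 + speed t2) * \<delta>"
  have cont: "continuous_on (cbox a b \<times> cbox \<alpha> (\<alpha> + \<delta>)) (\<lambda>(s, x). norm (c\<^sub>t s x))"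
    "continuous_on ({\<alpha>..\<alpha> + \<delta>} \<times> cbox a b) (\<lambda>(x, s). norm (c\<^sub>t s x))"
    using ab(2) by (auto intro: continuous_on_norm_c_t)
  have g_integrable: "g integrable_on {\<alpha>..\<alpha> + \<delta>}"
    using integral_continuous_on_param[OF cont(2)]
    by (simp add: g_def[abs_def] integrable_continuous_interval)
  have "\<delta> * norm (c t1 \<theta> - c t2 \<theta>) = integral {\<alpha>..\<alpha> + \<delta>} (\<lambda>x. norm (c t1 \<theta> - c t2 \<theta>))"
    using \<delta> by simp
  also have "\<dots> \<le> integral {\<alpha>..\<alpha> + \<delta>} (\<lambda>x. ?V + g x)"
  proof (rule integral_le)
    show "(\<lambda>x. ?V + g x) integrable_on {\<alpha>..\<alpha> + \<delta>}"
      using g_integrable by (intro integrable_add integrable_const_ivl)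
    show "norm (c t1 \<theta> - c t2 \<theta>) \<le> ?V + g x" if "x \<in> {\<alpha>..\<alpha> + \<delta>}" for x
      using norm_c_time_diff_le_nearby_angle[OF t1 t2, of x \<theta> \<delta>] that \<alpha>
      by (simp add: a_def b_def g_def abs_le_iff)
  qed (rule integrable_const_ivl)
  also have "\<dots> = \<delta> * ?V + integral {\<alpha>..\<alpha> + \<delta>} g"
    by (subst integral_add) (use \<delta> g_integrable in auto)
  also have "\<dots> = \<delta> * ?V + integral {a..b} (\<lambda>s. integral {\<alpha>..\<alpha> + \<delta>} (\<lambda>x. norm (c\<^sub>t s x)))"
    unfolding g_def by (simp only: integral_integral_norm_c_t_swap[OF ab(2)])
  also have "\<dots> \<le> \<delta> * ?V + integral {a..b} (\<lambda>s. B)"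
    using \<alpha> window integral_continuous_on_param[OF cont(1)]
    by (intro add_left_mono integral_le integrable_continuous_interval)
      (auto simp: a_def b_def)
  also have "integral {a..b} (\<lambda>s. B) = \<bar>t1 - t2\<bar> * B"
    using ab by simp
  finally show ?thesis
    using \<delta> by (simp add: field_simps)
qed

lemma speed_comparable:
  assumes t: "t \<in> {0..1}" and t': "t' \<in> {0..1}" and s: "s \<in> {min t t'..max t t'}"
    and close: "\<bar>t - t'\<bar> * L \<le> sqrt (A * curve_length c t) / 4"
  shows "speed t / 2 \<le> speed s" and "speed s \<le> 2 * speed t"
proof -
  have s01: "s \<in> {0..1}"
    using s t t' by auto
  have "\<bar>s - t\<bar> * L \<le> \<bar>t - t'\<bar> * L"
    using s L_pos by (intro mult_right_mono) auto
  have "\<bar>sqrt (speed s) - sqrt (speed t)\<bar> \<le> L / (4 * sqrt A) * \<bar>s - t\<bar>"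
    by (rule sqrt_speed_lipschitz[OF s01 t])
  also have "\<dots> \<le> sqrt (A * curve_length c t) / (16 * sqrt A)"
    using \<open>\<bar>s - t\<bar> * L \<le> \<bar>t - t'\<bar> * L\<close> close A_pos by (simp add: field_simps)
  also have "\<dots> = sqrt (2 * pi) * sqrt (speed t) / 16"
    using A_pos by (simp add: curve_length_eq real_sqrt_mult)
  also have "\<dots> \<le> 16 / 5 * sqrt (speed t) / 16"
  proof -
    have "sqrt (2 * pi) \<le> 16 / 5"
      by (rule real_le_lsqrt) (use pi_less_4 in \<open>simp_all add: power2_eq_square\<close>)
    then show ?thesis
      using speed_pos[OF t] by (intro divide_right_mono mult_right_mono) auto
  qed
  finally have "\<bar>sqrt (speed s) - sqrt (speed t)\<bar> \<le> sqrt (speed t) / 5"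
    by simp
  then have lower: "4 / 5 * sqrt (speed t) \<le> sqrt (speed s)"
    and upper: "sqrt (speed s) \<le> 6 / 5 * sqrt (speed t)"
    by linarith+
  have "(4 / 5 * sqrt (speed t))\<^sup>2 \<le> (sqrt (speed s))\<^sup>2"
    using lower speed_pos[OF t] by (intro power_mono) auto
  moreover have "(sqrt (speed s))\<^sup>2 \<le> (6 / 5 * sqrt (speed t))\<^sup>2"
    using upper speed_pos[OF s01] by (intro power_mono) auto
  ultimately
  show "speed t / 2 \<le> speed s" and "speed s \<le> 2 * speed t"
    using speed_pos[OF s01] speed_pos[OF t] by (simp_all add: power_mult_distrib power_divide)
qed

lemma integral_norm_c_t_window_le_comparable:
  assumes t: "t \<in> {0..1}" and s: "s \<in> {0..1}"
    and comparable: "speed t / 2 \<le> speed s" "speed s \<le> 2 * speed t"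
    and window: "0 \<le> \<alpha>" "\<alpha> + \<delta> \<le> 2 * pi" "0 \<le> \<delta>"
  shows "integral {\<alpha>..\<alpha> + \<delta>} (\<lambda>\<theta>. norm (c\<^sub>t s \<theta>))
    \<le> \<delta> * (2 * L * sqrt (4 * pi * speed t / A)) + sqrt \<delta> * (L * sqrt (2 / speed t))"
proof -
  have "2 * pi * speed s / A \<le> 4 * pi * speed t / A"
    using comparable A_pos by (intro divide_right_mono) auto
  then have "L * sqrt (2 * pi * speed s / A) \<le> L * sqrt (4 * pi * speed t / A)"
    using L_pos by (simp add: mult_left_mono)
  with bending_le[OF s] have bending: "bending s \<le> L * sqrt (4 * pi * speed t / A)"
    by (rule order_trans)
  have "sqrt (speed t / 2) \<le> sqrt (speed s)"
    using comparable by simp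
  then have "1 / sqrt (speed s) \<le> 1 / sqrt (speed t / 2)"
    using speed_pos[OF t] by (intro divide_left_mono) auto
  then have "L * (1 / sqrt (speed s)) \<le> L * (1 / sqrt (speed t / 2))"
    using L_pos by (intro mult_left_mono) auto
  moreover have "1 / sqrt (speed t / 2) = sqrt (2 / speed t)"
    by (simp add: real_sqrt_divide)
  ultimately have speed: "L / sqrt (speed s) \<le> L * sqrt (2 / speed t)"
    by simp
  have "integral {\<alpha>..\<alpha> + \<delta>} (\<lambda>\<theta>. norm (c\<^sub>t s \<theta>))
      \<le> \<delta> * (2 * bending s) + sqrt \<delta> * (L / sqrt (speed s))"
    by (rule integral_norm_c_t_window_le[OF s window])
  also have "\<dots> \<le> \<delta> * (2 * L * sqrt (4 * pi * speed t / A)) + sqrt \<delta> * (L * sqrt (2 / speed t))"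
    using bending speed window(3) by (intro add_mono mult_left_mono) auto
  finally show ?thesis .
qed

lemma norm_c_time_diff_le:
  assumes t1: "t1 \<in> {0..1}" and t2: "t2 \<in> {0..1}" and \<theta>: "\<theta> \<in> {0..2 * pi}"
    and close_A: "\<bar>t1 - t2\<bar> * L \<le> sqrt (A * curve_length c t1) / 4"
    and close_l: "\<bar>t1 - t2\<bar> * L \<le> curve_length c t1 powr (3 / 2) / 8"
  shows "norm (c t1 \<theta> - c t2 \<theta>) \<le> 7 * (curve_length c t1 powr (3 / 4) * A powr (- 1 / 4)
    + curve_length c t1 powr (1 / 4)) * sqrt (L * \<bar>t1 - t2\<bar>)"
proof (cases "t1 = t2")
  case False
  define \<tau> \<delta> where "\<tau> = \<bar>t1 - t2\<bar>"
    and "\<delta> = pi * sqrt (L * \<tau>) / curve_length c t1 powr (3 / 4)"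
  have l: "0 < curve_length c t1"
    using speed_pos[OF t1] by (simp add: curve_length_eq)
  have \<tau>: "0 < \<tau>"
    using False by (simp add: \<tau>_def)
  have "speed t1 = curve_length c t1 / (2 * pi)"
    by (simp add: curve_length_eq)
  note choice = window_bound_le_powr[OF l A_pos L_pos \<tau> close_A[folded \<tau>_def] close_l[folded \<tau>_def]
      this \<delta>_def]
  note \<delta> = choice(1,2)
  note comparable = speed_comparable[OF t1 t2 _ close_A]
  define X Y where "X = 2 * L * sqrt (4 * pi * speed t1 / A)" and "Y = L * sqrt (2 / speed t1)"
  have "norm (c t1 \<theta> - c t2 \<theta>) \<le> (speed t1 + speed t2) * \<delta> + \<tau> * (\<delta> * X + sqrt \<delta> * Y) / \<delta>"
    unfolding \<tau>_def X_def Y_def using comparable t1 t2 \<delta>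
    by (intro norm_c_time_diff_le_window_average[OF t1 t2 \<theta> \<delta>]
        integral_norm_c_t_window_le_comparable[OF t1]) auto
  also have "\<dots> \<le> 3 * speed t1 * \<delta> + \<tau> * X + \<tau> * Y / sqrt \<delta>"
  proof -
    have "(speed t1 + speed t2) * \<delta> \<le> 3 * speed t1 * \<delta>"
      using comparable[of t2] \<delta> by (intro mult_right_mono) auto
    moreover have "\<tau> * (\<delta> * X + sqrt \<delta> * Y) / \<delta> = \<tau> * X + \<tau> * Y / sqrt \<delta>"
      using \<delta> by (simp add: field_simps)
    ultimately show ?thesis
      by linarith
  qed
  also have "\<dots> \<le> 7 * (curve_length c t1 powr (3 / 4) * A powr (- 1 / 4)
      + curve_length c t1 powr (1 / 4)) * sqrt (L * \<tau>)"
    unfolding X_def Y_def by (rule choice(3))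
  finally show ?thesis
    by (simp add: \<tau>_def)
qed simp

lemma compact_curve_lengths: "compact (curve_length c ` {0..1})"
proof -
  have "continuous_on {0..1} (\<lambda>t. 2 * pi * norm (c\<^sub>\<theta> t 0))"
    by (intro continuous_intros continuous_on_section_fst[OF continuous_c_theta]) auto
  then have "continuous_on {0..1} (curve_length c)"
    by (rule continuous_on_eq) (simp add: curve_length_eq norm_c_theta)
  then show ?thesis
    by (rule compact_continuous_image[OF _ compact_Icc])
qed

lemma norm_c_diff_le:
  assumes t1: "t1 \<in> {0..1}" and t2: "t2 \<in> {0..1}" and \<theta>2: "\<theta>2 \<in> {0..2 * pi}"
    and lower: "\<And>t. t \<in> {0..1} \<Longrightarrow> l_min \<le> curve_length c t" and "0 \<le> l_min"
    and upper: "\<And>t. t \<in> {0..1} \<Longrightarrow> curve_length c t \<le> l_max"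
    and close: "\<bar>t1 - t2\<bar> \<le> min (2 * sqrt (A * l_min)) (l_min powr (3 / 2)) / (8 * L)"
  shows "norm (c t1 \<theta>1 - c t2 \<theta>2) \<le> l_max / (2 * pi) * \<bar>\<theta>1 - \<theta>2\<bar>
    + 7 * (l_max powr (3 / 4) * A powr (- 1 / 4) + l_max powr (1 / 4)) * sqrt (L * \<bar>t1 - t2\<bar>)"
proof -
  let ?l = "curve_length c t1"
  have l: "0 < ?l"
    using speed_pos[OF t1] by (simp add: curve_length_eq)
  have "\<bar>t1 - t2\<bar> * L \<le> min (2 * sqrt (A * l_min)) (l_min powr (3 / 2)) / 8"
    using close L_pos by (simp add: field_simps)
  moreover have "sqrt (A * l_min) \<le> sqrt (A * ?l)" and "l_min powr (3 / 2) \<le> ?l powr (3 / 2)"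
    using lower[OF t1] \<open>0 \<le> l_min\<close> A_pos by (auto intro: powr_mono2)
  ultimately have "\<bar>t1 - t2\<bar> * L \<le> sqrt (A * ?l) / 4" and "\<bar>t1 - t2\<bar> * L \<le> ?l powr (3 / 2) / 8"
    by linarith+
  from norm_c_time_diff_le[OF t1 t2 \<theta>2 this]
  have "norm (c t1 \<theta>2 - c t2 \<theta>2)
      \<le> 7 * (?l powr (3 / 4) * A powr (- 1 / 4) + ?l powr (1 / 4)) * sqrt (L * \<bar>t1 - t2\<bar>)" .
  also have "\<dots> \<le> 7 * (l_max powr (3 / 4) * A powr (- 1 / 4) + l_max powr (1 / 4))
      * sqrt (L * \<bar>t1 - t2\<bar>)"
    using upper[OF t1] l L_pos by (intro mult_right_mono mult_left_mono add_mono powr_mono2) auto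
  moreover have "speed t1 \<le> l_max / (2 * pi)"
    using upper[OF t1] by (simp add: curve_length_eq field_simps)
  then have "norm (c t1 \<theta>1 - c t1 \<theta>2) \<le> l_max / (2 * pi) * \<bar>\<theta>1 - \<theta>2\<bar>"
    using c_lipschitz_theta[OF t1, of \<theta>1 \<theta>2] by (meson abs_ge_zero mult_right_mono order_trans)
  moreover have "norm (c t1 \<theta>1 - c t2 \<theta>2) \<le> norm (c t1 \<theta>1 - c t1 \<theta>2) + norm (c t1 \<theta>2 - c t2 \<theta>2)"
    by norm
  ultimately show ?thesis
    by linarith
qed

end

theorem corollary3p8:
  fixes c :: "real \<Rightarrow> real \<Rightarrow> complex" and A L :: real
  assumes A_pos: "A > 0" and L_pos: "L > 0"
    and path: "smooth_imm_path c"
    and const_speed: "\<forall>t\<in>{0..1}. \<forall>\<theta>. norm (d_theta c t \<theta>) = curve_length c t / (2 * pi)"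
    and normal_at0: "\<forall>t\<in>{0..1}. inner (d_t c t 0) (d_theta c t 0) = 0"
    and energy: "\<forall>t\<in>{0..1}.
       integral {0..2 * pi} (\<lambda>\<theta>. (1 + A * (curvature c t \<theta>)\<^sup>2)
           * (inner (d_t c t \<theta>) (\<i> * d_theta c t \<theta>))\<^sup>2 / norm (d_theta c t \<theta>)) = L\<^sup>2"
    and t1: "t1 \<in> {0..1}" and t2: "t2 \<in> {0..1}"
    and th1: "\<theta>1 \<in> {0..2 * pi}" and th2: "\<theta>2 \<in> {0..2 * pi}"
    and close: "\<bar>t1 - t2\<bar> \<le> min (2 * sqrt (A * Inf (curve_length c ` {0..1})))
                                  (Inf (curve_length c ` {0..1}) powr (3/2)) / (8 * L)"
  shows "norm (c t1 \<theta>1 - c t2 \<theta>2)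
     \<le> Sup (curve_length c ` {0..1}) / (2 * pi) * \<bar>\<theta>1 - \<theta>2\<bar>
       + 7 * (Sup (curve_length c ` {0..1}) powr (3/4) * A powr (-1/4)
              + Sup (curve_length c ` {0..1}) powr (1/4)) * sqrt (L * \<bar>t1 - t2\<bar>)"
proof -
  obtain c\<^sub>t c\<^sub>\<theta> c\<^sub>\<theta>\<^sub>t c\<^sub>\<theta>\<^sub>\<theta> where family: "loop_family c c\<^sub>t c\<^sub>\<theta> c\<^sub>\<theta>\<^sub>t c\<^sub>\<theta>\<^sub>\<theta>"
    using smooth_imm_path_imp_loop_family[OF path] .
  interpret loop_family c c\<^sub>t c\<^sub>\<theta> c\<^sub>\<theta>\<^sub>t c\<^sub>\<theta>\<^sub>\<theta>
    by (rule family)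
  interpret constant_speed_path c c\<^sub>t c\<^sub>\<theta> c\<^sub>\<theta>\<^sub>t c\<^sub>\<theta>\<^sub>\<theta> A L
    by unfold_locales
      (use A_pos L_pos const_speed normal_at0 energy in \<open>simp_all add: d_theta_eq d_t_eq\<close>)
  have bounded: "bdd_below (curve_length c ` {0..1})" "bdd_above (curve_length c ` {0..1})"
    using compact_imp_bounded[OF compact_curve_lengths]
    by (auto intro: bounded_imp_bdd_below bounded_imp_bdd_above)
  have "0 \<le> Inf (curve_length c ` {0..1})"
    using speed_pos by (intro cInf_greatest) (auto simp: curve_length_eq less_imp_le)
  with bounded show ?thesis
    by (intro norm_c_diff_le[OF t1 t2 th2 _ _ _ close] cInf_lower cSup_upper) auto
qed

end
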